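(* Let $X$ be a real Banach space with $\dim X\ge 2$. Then $S_P(X)\ge \tfrac12\left(C'_{NJ}(X)-1\right)$.
   Context: For a real Banach space $X$ with unit sphere $S_X$, the P-angle constant is $S_P(X)=\sup\left\{\frac{\|x+y\|^2+\|x-y\|^2-4}{2\|x+y\|\,\|x-y\|}: x,y\in S_X,\ x\neq \pm y\right\}$. The modified von Neumann–Jordan constant is $C'_{NJ}(X)=\sup\left\{\frac{\|x+y\|^2+\|x-y\|^2}{4}: x,y\in S_X\right\}$. *)

theory Defs
  imports "HOL-Analysis.Analysis"
begin

definition P_angle_const :: "'a::real_normed_vector itself \<Rightarrow> real" where
  "P_angle_const _ = Sup {(norm (x + y) ^ 2 + norm (x - y) ^ 2 - 4) / (2 * norm (x + y) * norm (x - y)) | x y :: 'a.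
      norm x = 1 \<and> norm y = 1 \<and> x \<noteq> y \<and> x \<noteq> - y}"

definition mod_NJ_const :: "'a::real_normed_vector itself \<Rightarrow> real" where
  "mod_NJ_const _ = Sup {(norm (x + y) ^ 2 + norm (x - y) ^ 2) / 4 | x y :: 'a.
      norm x = 1 \<and> norm y = 1}"

end

theory Submission
  imports Defs
begin

text \<open>Write \<open>a = \<parallel>x + y\<parallel>\<close> and \<open>b = \<parallel>x - y\<parallel>\<close> for unit vectors \<open>x, y\<close>. Since \<open>a, b \<le> 2\<close>,
  whenever \<open>a\<^sup>2 + b\<^sup>2 > 4\<close> the P-angle quotient \<open>(a\<^sup>2 + b\<^sup>2 - 4) / (2ab)\<close> is at least
  \<open>(a\<^sup>2 + b\<^sup>2 - 4) / 8\<close>, which gives \<open>(a\<^sup>2 + b\<^sup>2) / 4 \<le> 2 S\<^sub>P(X) + 1\<close>; the remaining pairs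
  are covered once \<open>S\<^sub>P(X) \<ge> 0\<close>. Nonnegativity uses the dimension: moving \<open>y\<close> continuously
  from \<open>x\<close> to \<open>-x\<close> along the unit sphere yields a pair with \<open>a = b\<close>. Such a pair has
  nonnegative quotient if \<open>a\<^sup>2 \<ge> 2\<close>; otherwise the pair \<open>((x + y)/a, (x - y)/a)\<close>, whose sum
  and difference both have norm \<open>2/a > \<surd>2\<close>, does.\<close>

lemma independent_pair_scaleR_add_eq_0:
  fixes u v :: "'a::real_vector"
  assumes "u \<noteq> v" "independent {u, v}" "a *\<^sub>R u + b *\<^sub>R v = 0"
  shows "a = 0 \<and> b = 0"
proof -
  have u_notin: "u \<notin> span {v}" and v0: "v \<noteq> 0"
    using assms(1,2) by (auto simp: independent_insert dependent_zero)
  have "a = 0"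
  proof (rule ccontr)
    assume "a \<noteq> 0"
    then have "u = (- b / a) *\<^sub>R v"
      using assms(3) by (metis eq_neg_iff_add_eq_0 eq_vector_fraction_iff scaleR_minus_left)
    then show False
      using u_notin span_base span_scale by (metis singletonI)
  qed
  with assms(3) v0 show ?thesis by simp
qed

lemma exists_unit_pair_norm_add_eq_norm_diff:
  fixes u v :: "'a::real_normed_vector"
  assumes "u \<noteq> v" "independent {u, v}"
  obtains x y :: 'a where "norm x = 1" "norm y = 1" "norm (x + y) = norm (x - y)"
proof -
  have u0: "u \<noteq> 0" using assms(2) dependent_zero by blast
  define x where "x = u /\<^sub>R norm u"
  have nx: "norm x = 1" using u0 by (simp add: x_def)
  define z where "z t = (1 - 2*t) *\<^sub>R x + (t - t*t) *\<^sub>R v" for t :: real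
  have z0: "z t \<noteq> 0" for t
  proof
    assume "z t = 0"
    then have "((1 - 2*t) / norm u) *\<^sub>R u + (t - t*t) *\<^sub>R v = 0"
      by (simp add: z_def x_def divide_inverse_commute mult.commute)
    then have "(1 - 2*t) / norm u = 0" "t - t*t = 0"
      using independent_pair_scaleR_add_eq_0[OF assms] by blast+
    then show False using u0 by (auto simp: algebra_simps)
  qed
  define y where "y t = z t /\<^sub>R norm (z t)" for t
  define g where "g t = norm (x + y t) - norm (x - y t)" for t
  have "continuous_on {0..1} g"
    unfolding g_def y_def z_def using z0[unfolded z_def]
    by (intro continuous_intros) auto
  moreover have "y 0 = x" "y 1 = - x" using nx by (simp_all add: y_def z_def)
  then have "g 0 = 2" "g 1 = -2" using nx by (simp_all add: g_def flip: scaleR_2)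
  ultimately obtain t where "g t = 0"
    using IVT2'[of g 1 0 0] by auto
  moreover have "norm (y t) = 1" using z0 by (simp add: y_def)
  ultimately show ?thesis using nx that by (simp add: g_def)
qed

definition P_angle_quotient :: "'a::real_normed_vector \<Rightarrow> 'a \<Rightarrow> real" where
  "P_angle_quotient x y =
     (norm (x + y) ^ 2 + norm (x - y) ^ 2 - 4) / (2 * norm (x + y) * norm (x - y))"

lemma P_angle_const_eq_Sup_P_angle_quotient:
  "P_angle_const TYPE('a::real_normed_vector) =
     Sup {P_angle_quotient x y | x y :: 'a. norm x = 1 \<and> norm y = 1 \<and> x \<noteq> y \<and> x \<noteq> - y}"
  unfolding P_angle_const_def P_angle_quotient_def ..

lemma P_angle_quotient_nonneg:
  assumes "4 \<le> norm (x + y) ^ 2 + norm (x - y) ^ 2"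
  shows "0 \<le> P_angle_quotient x y"
  using assms unfolding P_angle_quotient_def by simp

lemma P_angle_quotient_le_1:
  fixes x y :: "'a::real_normed_vector"
  assumes "norm x = 1" "norm y = 1" "x \<noteq> y" "x \<noteq> - y"
  shows "P_angle_quotient x y \<le> 1"
proof -
  define a where "a = norm (x + y)"
  define b where "b = norm (x - y)"
  have "a > 0" "b > 0"
    using assms(3,4) by (auto simp: a_def b_def add_eq_0_iff)
  have "norm ((x + y) - (x - y)) = 2"
    using assms(2) by (simp flip: scaleR_2)
  then have "\<bar>a - b\<bar> \<le> 2"
    unfolding a_def b_def by (metis norm_triangle_ineq3)
  then have "(a - b)\<^sup>2 \<le> 2\<^sup>2" by (metis abs_le_square_iff abs_numeral)
  then have "a\<^sup>2 + b\<^sup>2 - 4 \<le> 2 * a * b" by (simp add: power2_diff)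
  with \<open>a > 0\<close> \<open>b > 0\<close> show ?thesis
    unfolding P_angle_quotient_def a_def[symmetric] b_def[symmetric]
    by (simp add: divide_le_eq)
qed

lemma P_angle_quotient_le_P_angle_const:
  fixes x y :: "'a::real_normed_vector"
  assumes "norm x = 1" "norm y = 1" "x \<noteq> y" "x \<noteq> - y"
  shows "P_angle_quotient x y \<le> P_angle_const TYPE('a)"
  unfolding P_angle_const_eq_Sup_P_angle_quotient
proof (rule cSup_upper)
  show "bdd_above {P_angle_quotient x y | x y :: 'a.
          norm x = 1 \<and> norm y = 1 \<and> x \<noteq> y \<and> x \<noteq> - y}"
    by (rule bdd_aboveI[of _ 1]) (auto intro: P_angle_quotient_le_1)
qed (use assms in blast)

lemma P_angle_const_nonneg_of_norm_add_eq_norm_diff: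
  fixes x y :: "'a::real_normed_vector"
  assumes nx: "norm x = 1" and ny: "norm y = 1" and ab: "norm (x + y) = norm (x - y)"
  shows "0 \<le> P_angle_const TYPE('a)"
proof -
  define a where "a = norm (x + y)"
  have "x + y \<noteq> 0"
  proof
    assume "x + y = 0"
    then have "(x + y) + (x - y) = 0" using ab by simp
    then show False using nx by (simp flip: scaleR_2)
  qed
  then have a0: "a > 0" by (simp add: a_def)
  have "x \<noteq> - y" "x \<noteq> y"
    using a0 ab by (auto simp: a_def add_eq_0_iff)
  show ?thesis
  proof (cases "2 \<le> a\<^sup>2")
    case True
    then have "0 \<le> P_angle_quotient x y"
      using ab by (intro P_angle_quotient_nonneg) (simp add: a_def)
    with P_angle_quotient_le_P_angle_const[OF nx ny \<open>x \<noteq> y\<close> \<open>x \<noteq> - y\<close>] show ?thesis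
      by linarith
  next
    case False
    define x' where "x' = (x + y) /\<^sub>R a"
    define y' where "y' = (x - y) /\<^sub>R a"
    have "norm x' = 1" "norm y' = 1"
      using a0 ab by (simp_all add: x'_def y'_def a_def)
    have "x' + y' = (2 / a) *\<^sub>R x" "x' - y' = (2 / a) *\<^sub>R y"
      unfolding x'_def y'_def
      by (simp_all add: algebra_simps divide_inverse_commute
          flip: scaleR_add_right scaleR_diff_right scaleR_2)
    then have sum: "norm (x' + y') = 2 / a" and diff: "norm (x' - y') = 2 / a"
      using nx ny a0 by simp_all
    then have "x' \<noteq> y'" "x' \<noteq> - y'" using a0 by auto
    have "2 \<le> 4 / a\<^sup>2" using False a0 by (simp add: le_divide_eq)
    then have "0 \<le> P_angle_quotient x' y'"
      by (intro P_angle_quotient_nonneg) (simp add: sum diff power_divide)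
    with P_angle_quotient_le_P_angle_const[OF \<open>norm x' = 1\<close> \<open>norm y' = 1\<close> \<open>x' \<noteq> y'\<close> \<open>x' \<noteq> - y'\<close>]
    show ?thesis by linarith
  qed
qed

lemma norm_add_diff_squares_le_P_angle_const:
  fixes x y :: "'a::real_normed_vector"
  assumes nx: "norm x = 1" and ny: "norm y = 1" and P0: "0 \<le> P_angle_const TYPE('a)"
  shows "(norm (x + y) ^ 2 + norm (x - y) ^ 2) / 4 \<le> 2 * P_angle_const TYPE('a) + 1"
proof (cases "x \<noteq> y \<and> x \<noteq> - y \<and> 4 < norm (x + y) ^ 2 + norm (x - y) ^ 2")
  case True
  define a where "a = norm (x + y)"
  define b where "b = norm (x - y)"
  have "a \<le> 2" "b \<le> 2"
    using norm_triangle_ineq[of x y] norm_triangle_ineq4[of x y] nx ny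
    by (simp_all add: a_def b_def)
  moreover have "a > 0" "b > 0" using True by (auto simp: a_def b_def add_eq_0_iff)
  ultimately have "2 * a * b \<le> 8" using mult_mono[of a 2 b 2] by simp
  then have "(a\<^sup>2 + b\<^sup>2 - 4) / 8 \<le> (a\<^sup>2 + b\<^sup>2 - 4) / (2 * a * b)"
    using True \<open>a > 0\<close> \<open>b > 0\<close> by (intro divide_left_mono) (auto simp: a_def b_def)
  also have "\<dots> = P_angle_quotient x y"
    by (simp add: P_angle_quotient_def a_def b_def)
  also have "\<dots> \<le> P_angle_const TYPE('a)"
    using True by (intro P_angle_quotient_le_P_angle_const nx ny) auto
  finally show ?thesis by (simp add: a_def b_def)
next
  case False
  have "norm (x + y) ^ 2 + norm (x - y) ^ 2 \<le> 4"
    using False nx by (auto simp: norm_minus_commute[of "- y" y] simp flip: scaleR_2)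
  with P0 show ?thesis by simp
qed

theorem theorem4p1:
  assumes "\<exists>u v :: 'a::banach. u \<noteq> v \<and> independent {u, v}"
  shows "P_angle_const TYPE('a) \<ge> (mod_NJ_const TYPE('a) - 1) / 2"
proof -
  obtain u v :: 'a where uv: "u \<noteq> v" "independent {u, v}" using assms by blast
  then obtain x y :: 'a where xy: "norm x = 1" "norm y = 1" "norm (x + y) = norm (x - y)"
    by (rule exists_unit_pair_norm_add_eq_norm_diff)
  then have P0: "0 \<le> P_angle_const TYPE('a)"
    by (rule P_angle_const_nonneg_of_norm_add_eq_norm_diff)
  have "mod_NJ_const TYPE('a) \<le> 2 * P_angle_const TYPE('a) + 1"
    unfolding mod_NJ_const_def
    using xy(1) norm_add_diff_squares_le_P_angle_const[OF _ _ P0]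
    by (intro cSup_least) blast+
  then show ?thesis by simp
qed

end
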